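(* Let $H$ be a fractionally $k$-colored digraph on $n$ nodes, and let $\mathbb{L}(H)$ be the random $k$-colored digraph obtained from it. Then $d_\square(H,\mathbb{L}(H))\le \frac{10k}{\sqrt n}$ with probability at least $1-ke^{-n}$.
   Context: A fractionally $k$-colored digraph $H$ on node set $V$ assigns to every ordered pair $(i,j)$ of distinct nodes nonnegative weights $\beta^1_H(i,j),\dots,\beta^k_H(i,j)$ with $\sum_h\beta^h_H(i,j)=1$; a $k$-colored digraph (complete digraph with each ordered pair of distinct nodes colored by one of $1,\dots,k$) is the special case where $\beta^h$ is the indicator of color $h$. The random $k$-colored digraph $\mathbb{L}(H)$ on $V$ colors each pair with color $h$ with probability $\beta^h_H(i,j)$, independently for different pairs. For two fractionally $k$-colored digraphs $H,H'$ on the same node set $V$, $d_\square(H,H')=\frac{1}{|V|^2}\sum_{h=1}^k\max_{S,T\subseteq V}\Bigl|\sum_{i\in S, j\in T}(\beta^h_H(i,j)-\beta^h_{H'}(i,j))\Bigr|$. *)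

theory Defs
  imports "HOL-Probability.Probability"
begin

text \<open>Colors are 1..k. A (fractionally) colored digraph on node set V is given by
  weights beta i j h for ordered pairs (i,j) of distinct nodes of V and colors h.\<close>

definition pairs :: "'a set \<Rightarrow> ('a \<times> 'a) set" where
  "pairs V = {(i, j). i \<in> V \<and> j \<in> V \<and> i \<noteq> j}"

definition frac_colored :: "'a set \<Rightarrow> nat \<Rightarrow> ('a \<Rightarrow> 'a \<Rightarrow> nat \<Rightarrow> real) \<Rightarrow> bool" where
  "frac_colored V k beta \<longleftrightarrow>
     (\<forall>i\<in>V. \<forall>j\<in>V. i \<noteq> j \<longrightarrow>
        (\<forall>h\<in>{1..k}. 0 \<le> beta i j h) \<and> (\<Sum>h=1..k. beta i j h) = 1)"

definition color_pmf :: "nat \<Rightarrow> ('a \<Rightarrow> 'a \<Rightarrow> nat \<Rightarrow> real) \<Rightarrow> 'a \<Rightarrow> 'a \<Rightarrow> nat pmf" where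
  "color_pmf k beta i j = embed_pmf (\<lambda>h. if h \<in> {1..k} then beta i j h else 0)"

text \<open>The random k-colored digraph L(H): independent colors on the pairs; a coloring is
  a function from pairs to colors (value 0 outside the pairs).\<close>
definition random_coloring ::
  "'a set \<Rightarrow> nat \<Rightarrow> ('a \<Rightarrow> 'a \<Rightarrow> nat \<Rightarrow> real) \<Rightarrow> ('a \<times> 'a \<Rightarrow> nat) pmf" where
  "random_coloring V k beta = Pi_pmf (pairs V) 0 (\<lambda>(i, j). color_pmf k beta i j)"

definition coloring_weights :: "('a \<times> 'a \<Rightarrow> nat) \<Rightarrow> 'a \<Rightarrow> 'a \<Rightarrow> nat \<Rightarrow> real" where
  "coloring_weights c i j h = (if c (i, j) = h then 1 else 0)"

text \<open>Cut distance d_box (sum over distinct pairs only, where the weights are defined).\<close>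
definition cut_dist ::
  "'a set \<Rightarrow> nat \<Rightarrow> ('a \<Rightarrow> 'a \<Rightarrow> nat \<Rightarrow> real) \<Rightarrow> ('a \<Rightarrow> 'a \<Rightarrow> nat \<Rightarrow> real) \<Rightarrow> real" where
  "cut_dist V k beta beta' =
     (1 / real (card V) ^ 2) *
     (\<Sum>h=1..k. Max {\<bar>\<Sum>(i, j)\<in>(S \<times> T) \<inter> pairs V. beta i j h - beta' i j h\<bar> | S T.
                       S \<subseteq> V \<and> T \<subseteq> V})"

end

theory Submission
  imports Defs
begin

text \<open>For a fixed colour h and cut (S, T), the deviation of L(H) from H is a sum of at most
  n^2 independent centred variables, each ranging over an interval of length 1, so by
  Hoeffding's inequality it exceeds \<open>\<epsilon> = 10 n \<surd>n\<close> with probability at most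
  \<open>2 exp (-2\<epsilon>^2 / n^2) = 2 exp (-200 n)\<close>. A union bound over the k colours and the
  4^n cuts leaves a failure probability of at most \<open>k exp (-n)\<close>, and outside the failure
  event each of the k terms of the cut distance is at most \<open>\<epsilon> / n^2 = 10 / \<surd>n\<close>.\<close>

definition cut_deviation ::
  "'a set \<Rightarrow> ('a \<Rightarrow> 'a \<Rightarrow> nat \<Rightarrow> real) \<Rightarrow> ('a \<Rightarrow> 'a \<Rightarrow> nat \<Rightarrow> real) \<Rightarrow> nat \<Rightarrow> 'a set \<Rightarrow> 'a set \<Rightarrow> real"
  where "cut_deviation V beta beta' h S T =
    \<bar>\<Sum>(i, j)\<in>(S \<times> T) \<inter> pairs V. beta i j h - beta' i j h\<bar>"

lemma finite_pairs: "finite V \<Longrightarrow> finite (pairs V)"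
  by (rule finite_subset[of _ "V \<times> V"]) (auto simp: pairs_def)

lemma card_pairs_cut_le:
  assumes "finite V" "S \<subseteq> V" "T \<subseteq> V"
  shows "card ((S \<times> T) \<inter> pairs V) \<le> card V ^ 2"
proof -
  have "card ((S \<times> T) \<inter> pairs V) \<le> card (V \<times> V)"
    by (rule card_mono) (use assms in auto)
  then show ?thesis by (simp add: card_cartesian_product power2_eq_square)
qed

lemma pmf_color_pmf:
  assumes "frac_colored V k beta" "i \<in> V" "j \<in> V" "i \<noteq> j"
  shows "pmf (color_pmf k beta i j) h = (if h \<in> {1..k} then beta i j h else 0)"
proof -
  let ?f = "\<lambda>h. if h \<in> {1..k} then beta i j h else 0"
  have nonneg: "\<And>x. 0 \<le> ?f x" using assms unfolding frac_colored_def by auto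
  have "(\<integral>\<^sup>+x. ennreal (?f x) \<partial>count_space UNIV) = (\<Sum>x\<in>{1..k}. ennreal (?f x))"
    by (rule nn_integral_count_space') auto
  also have "\<dots> = ennreal (\<Sum>x\<in>{1..k}. ?f x)" by (rule sum_ennreal) (rule nonneg)
  also have "(\<Sum>x\<in>{1..k}. ?f x) = 1" using assms unfolding frac_colored_def by auto
  finally show ?thesis unfolding color_pmf_def using nonneg by (subst pmf_embed_pmf) auto
qed

lemma map_pmf_random_coloring_component:
  assumes "finite V" "p \<in> pairs V"
  shows "map_pmf (\<lambda>c. c p) (random_coloring V k beta) = color_pmf k beta (fst p) (snd p)"
  using assms unfolding random_coloring_def
  by (subst Pi_pmf_component) (auto simp: finite_pairs, auto simp: pairs_def split: prod.splits)

lemma expectation_color_deviation: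
  assumes fc: "frac_colored V k beta" and fin: "finite V" and p: "(i, j) \<in> pairs V"
    and h: "h \<in> {1..k}"
  shows "measure_pmf.expectation (random_coloring V k beta)
           (\<lambda>c. beta i j h - coloring_weights c i j h) = 0"
proof -
  have ij: "i \<in> V" "j \<in> V" "i \<noteq> j" using p by (auto simp: pairs_def)
  have "measure_pmf.expectation (random_coloring V k beta)
           (\<lambda>c. beta i j h - coloring_weights c i j h) =
        measure_pmf.expectation (map_pmf (\<lambda>c. c (i, j)) (random_coloring V k beta))
           (\<lambda>x. beta i j h - indicator {h} x)"
    by (simp add: coloring_weights_def indicator_def of_bool_def)
  also have "\<dots> = measure_pmf.expectation (color_pmf k beta i j) (\<lambda>x. beta i j h - indicator {h} x)"
    using map_pmf_random_coloring_component[OF fin p] by simp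
  also have "\<dots> = beta i j h - pmf (color_pmf k beta i j) h"
    by (subst Bochner_Integration.integral_diff)
       (auto simp: measure_pmf.emeasure_eq_measure pmf.rep_eq)
  also have "\<dots> = 0" using pmf_color_pmf[OF fc ij] h by simp
  finally show ?thesis .
qed

lemma prob_color_deviation_ge:
  assumes fc: "frac_colored V k beta" and fin: "finite V" and h: "h \<in> {1..k}"
    and P: "P \<subseteq> pairs V" "P \<noteq> {}" and eps: "\<epsilon> \<ge> 0"
  shows "measure_pmf.prob (random_coloring V k beta)
     {c. \<epsilon> \<le> \<bar>\<Sum>(i, j)\<in>P. beta i j h - coloring_weights c i j h\<bar>}
      \<le> 2 * exp (-2 * \<epsilon>\<^sup>2 / real (card P))"
proof -
  let ?R = "random_coloring V k beta"
  let ?b = "\<lambda>(i, j). beta i j h"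
  define X where "X = (\<lambda>p (c :: 'a \<times> 'a \<Rightarrow> nat). ?b p - (if c p = h then 1 else 0 :: real))"
  have finP: "finite P" using finite_subset[OF P(1) finite_pairs[OF fin]] .
  have X_eq: "X p c = (\<lambda>(i, j). beta i j h - coloring_weights c i j h) p" for p c
    unfolding X_def coloring_weights_def by (cases p) auto
  have mean: "(\<Sum>p\<in>P. measure_pmf.expectation ?R (X p)) = 0"
    using expectation_color_deviation[OF fc fin _ h] P(1)
    by (intro sum.neutral) (auto simp: X_eq[abs_def] split: prod.splits)
  interpret Hoeffding_ineq "measure_pmf ?R" P X "\<lambda>p. ?b p - 1" ?b
    "\<Sum>p\<in>P. measure_pmf.expectation ?R (X p)"
  proof unfold_locales
    show "finite P" by (rule finP)
    show "prob_space.indep_vars (measure_pmf ?R) (\<lambda>_. borel) X P"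
      unfolding X_def random_coloring_def
      by (intro prob_space.indep_vars_compose2[OF _ prob_space.indep_vars_subset[OF _ indep_vars_Pi_pmf]])
         (auto simp: measure_pmf.prob_space_axioms finite_pairs fin P)
    show "AE c in measure_pmf ?R. X p c \<in> {?b p - 1..?b p}" for p
      by (intro always_eventually) (auto simp: X_def)
  qed simp
  have "measure_pmf.prob ?R {c \<in> space (measure_pmf ?R).
          \<epsilon> \<le> \<bar>(\<Sum>p\<in>P. X p c) - (\<Sum>p\<in>P. measure_pmf.expectation ?R (X p))\<bar>}
     \<le> 2 * exp (-2 * \<epsilon>\<^sup>2 / (\<Sum>p\<in>P. (?b p - (?b p - 1))\<^sup>2))"
    by (rule Hoeffding_ineq_abs_ge[OF eps]) (use finP P(2) in \<open>simp add: card_gt_0_iff\<close>)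
  then show ?thesis using finP by (simp add: mean X_eq)
qed

lemma prob_cut_deviation_ge:
  assumes fc: "frac_colored V k beta" and fin: "finite V" and h: "h \<in> {1..k}"
    and ST: "S \<subseteq> V" "T \<subseteq> V" and eps: "\<epsilon> > 0"
  shows "measure_pmf.prob (random_coloring V k beta)
           {c. \<epsilon> \<le> cut_deviation V beta (coloring_weights c) h S T}
         \<le> 2 * exp (-2 * \<epsilon>\<^sup>2 / real (card V) ^ 2)"
proof (cases "(S \<times> T) \<inter> pairs V = {}")
  case True
  then show ?thesis using eps by (simp add: cut_deviation_def)
next
  case False
  let ?P = "(S \<times> T) \<inter> pairs V"
  have card_pos: "real (card ?P) > 0"
    using False finite_pairs[OF fin] by (simp add: card_gt_0_iff)
  have card_le: "real (card ?P) \<le> real (card V) ^ 2"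
    using card_pairs_cut_le[OF fin ST] by (metis of_nat_le_iff of_nat_power)
  with card_pos have "real (card V) ^ 2 > 0" by linarith
  with card_le have "-2 * \<epsilon>\<^sup>2 / real (card ?P) \<le> -2 * \<epsilon>\<^sup>2 / real (card V) ^ 2"
    using card_pos eps by (intro divide_left_mono_neg) auto
  moreover have "measure_pmf.prob (random_coloring V k beta)
           {c. \<epsilon> \<le> cut_deviation V beta (coloring_weights c) h S T}
         \<le> 2 * exp (-2 * \<epsilon>\<^sup>2 / real (card ?P))"
    unfolding cut_deviation_def using prob_color_deviation_ge[OF fc fin h _ False] eps by simp
  ultimately show ?thesis by (smt (verit) exp_le_cancel_iff)
qed

lemma prob_some_cut_deviation_ge:
  assumes fc: "frac_colored V k beta" and fin: "finite V" and eps: "\<epsilon> > 0"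
  shows "measure_pmf.prob (random_coloring V k beta)
           {c. \<exists>h\<in>{1..k}. \<exists>S\<subseteq>V. \<exists>T\<subseteq>V. \<epsilon> \<le> cut_deviation V beta (coloring_weights c) h S T}
         \<le> real k * (2 ^ card V * 2 ^ card V) * (2 * exp (-2 * \<epsilon>\<^sup>2 / real (card V) ^ 2))"
proof -
  let ?R = "random_coloring V k beta"
  define E where "E = (\<lambda>(h, S, T). {c. \<epsilon> \<le> cut_deviation V beta (coloring_weights c) h S T})"
  define Idx where "Idx = {1..k} \<times> Pow V \<times> Pow V"
  have "{c. \<exists>h\<in>{1..k}. \<exists>S\<subseteq>V. \<exists>T\<subseteq>V. \<epsilon> \<le> cut_deviation V beta (coloring_weights c) h S T}
        = \<Union> (E ` Idx)"
    by (auto simp: E_def Idx_def)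
  also have "measure_pmf.prob ?R \<dots> \<le> (\<Sum>x\<in>Idx. measure_pmf.prob ?R (E x))"
    by (rule measure_pmf.finite_measure_subadditive_finite) (use fin in \<open>auto simp: Idx_def\<close>)
  also have "\<dots> \<le> (\<Sum>x\<in>Idx. 2 * exp (-2 * \<epsilon>\<^sup>2 / real (card V) ^ 2))"
  proof (rule sum_mono)
    fix x assume "x \<in> Idx"
    then obtain h S T where "x = (h, S, T)" "h \<in> {1..k}" "S \<subseteq> V" "T \<subseteq> V"
      by (auto simp: Idx_def)
    then show "measure_pmf.prob ?R (E x) \<le> 2 * exp (-2 * \<epsilon>\<^sup>2 / real (card V) ^ 2)"
      using prob_cut_deviation_ge[OF fc fin _ _ _ eps] by (simp add: E_def)
  qed
  also have "\<dots> = real k * (2 ^ card V * 2 ^ card V) * (2 * exp (-2 * \<epsilon>\<^sup>2 / real (card V) ^ 2))"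
    using fin by (simp add: Idx_def card_cartesian_product card_Pow)
  finally show ?thesis .
qed

lemma cut_dist_le_uniform_cut_bound:
  assumes fin: "finite V"
    and bound: "\<And>h S T. h \<in> {1..k} \<Longrightarrow> S \<subseteq> V \<Longrightarrow> T \<subseteq> V \<Longrightarrow> cut_deviation V beta beta' h S T \<le> \<epsilon>"
  shows "cut_dist V k beta beta' \<le> real k * \<epsilon> / real (card V) ^ 2"
proof -
  have "Max {cut_deviation V beta beta' h S T | S T. S \<subseteq> V \<and> T \<subseteq> V} \<le> \<epsilon>"
    if h: "h \<in> {1..k}" for h
  proof -
    have "{cut_deviation V beta beta' h S T | S T. S \<subseteq> V \<and> T \<subseteq> V}
          = (\<lambda>(S, T). cut_deviation V beta beta' h S T) ` (Pow V \<times> Pow V)"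
      by auto
    then show ?thesis using fin bound[OF h] by (subst Max_le_iff) auto
  qed
  then have "cut_dist V k beta beta' \<le> (1 / real (card V) ^ 2) * (\<Sum>h=1..k. \<epsilon>)"
    unfolding cut_dist_def cut_deviation_def[symmetric] by (intro mult_left_mono sum_mono) auto
  then show ?thesis by simp
qed

lemma four_pow_exp_bound:
  assumes "n \<ge> (1::nat)"
  shows "2 ^ n * 2 ^ n * (2 * exp (- 200 * real n)) \<le> exp (- real n)"
proof -
  have "(2::real) ^ n \<le> exp 1 ^ n"
    using exp_ge_add_one_self[of 1] by (intro power_mono) auto
  then have pow: "(2::real) ^ n \<le> exp (real n)" by (simp add: exp_of_nat_mult[symmetric])
  have "(2::real) \<le> real n + 1" using assms by simp
  also have "\<dots> \<le> exp (real n)" using exp_ge_add_one_self[of "real n"] by (simp add: add.commute)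
  finally have two: "(2::real) \<le> exp (real n)" .
  have "2 ^ n * 2 ^ n * (2 * exp (- 200 * real n))
        \<le> exp (real n) * exp (real n) * (exp (real n) * exp (- 200 * real n))"
    by (intro mult_mono pow two) auto
  also have "\<dots> = exp (- 197 * real n)" by (simp flip: exp_add)
  also have "\<dots> \<le> exp (- real n)" by simp
  finally show ?thesis .
qed

theorem lemma1:
  fixes V :: "'a set" and k n :: nat and beta :: "'a \<Rightarrow> 'a \<Rightarrow> nat \<Rightarrow> real"
  assumes "finite V" and "card V = n" and "frac_colored V k beta"
  shows "measure_pmf.prob (random_coloring V k beta)
           {c. cut_dist V k beta (coloring_weights c) \<le> 10 * real k / sqrt (real n)}
         \<ge> 1 - real k * exp (- real n)"
proof (cases "n = 0")
  case True
  then show ?thesis using assms(2) by (simp add: cut_dist_def)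
next
  case False
  let ?R = "random_coloring V k beta"
  define \<epsilon> where "\<epsilon> = 10 * real n * sqrt (real n)"
  let ?Bad = "{c. \<exists>h\<in>{1..k}. \<exists>S\<subseteq>V. \<exists>T\<subseteq>V. \<epsilon> \<le> cut_deviation V beta (coloring_weights c) h S T}"
  have sqrt_n: "sqrt (real n) * sqrt (real n) = real n" "sqrt (real n) > 0" using False by auto
  have eps: "\<epsilon> > 0" and exponent: "-2 * \<epsilon>\<^sup>2 / real n ^ 2 = - 200 * real n"
    using False by (auto simp: \<epsilon>_def power_mult_distrib power2_eq_square)
  have "measure_pmf.prob ?R ?Bad
        \<le> real k * (2 ^ n * 2 ^ n * (2 * exp (- 200 * real n)))"
    using prob_some_cut_deviation_ge[OF assms(3,1) eps, unfolded assms(2) exponent]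
    by (simp only: mult.assoc)
  also have "\<dots> \<le> real k * exp (- real n)"
    using four_pow_exp_bound[of n] False by (intro mult_left_mono) auto
  finally have bad: "measure_pmf.prob ?R ?Bad \<le> real k * exp (- real n)" .
  have good: "UNIV - ?Bad \<subseteq> {c. cut_dist V k beta (coloring_weights c) \<le> 10 * real k / sqrt (real n)}"
  proof
    fix c assume "c \<in> UNIV - ?Bad"
    then have "cut_deviation V beta (coloring_weights c) h S T \<le> \<epsilon>"
      if "h \<in> {1..k}" "S \<subseteq> V" "T \<subseteq> V" for h S T
      using that by (metis (mono_tags, lifting) DiffD2 mem_Collect_eq nle_le)
    then have "cut_dist V k beta (coloring_weights c) \<le> real k * \<epsilon> / real n ^ 2"
      using cut_dist_le_uniform_cut_bound[OF assms(1)] assms(2) by blast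
    also have "\<dots> = 10 * real k / sqrt (real n)"
      using sqrt_n unfolding \<epsilon>_def by (simp add: field_simps power2_eq_square)
    finally show "c \<in> {c. cut_dist V k beta (coloring_weights c) \<le> 10 * real k / sqrt (real n)}"
      by simp
  qed
  have "1 - real k * exp (- real n) \<le> measure_pmf.prob ?R (UNIV - ?Bad)"
    using bad measure_pmf.prob_compl[of ?Bad ?R] by simp
  also have "\<dots> \<le> measure_pmf.prob ?R {c. cut_dist V k beta (coloring_weights c) \<le> 10 * real k / sqrt (real n)}"
    by (rule measure_pmf.finite_measure_mono[OF good]) simp
  finally show ?thesis .
qed

end
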